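(* For every $\varepsilon>0$ there exists a two-player protocol for the problem Max-Card-$k$ (in the two-player model described in the context) with an approximation guarantee of $\frac{2}{3}-\varepsilon$ whose communication complexity is $\widetilde{O}(k/\varepsilon)$ elements. Moreover, there exists such a protocol achieving an approximation guarantee of $\frac{2}{3}$ whose communication complexity is $O(k^2)$ elements.
   Context: Two-player model for Max-Card-$k$. The global information known to both players consists of a positive integer $k$, a finite ground set $W$, and a partition $W=W_A\,\dot\cup\, W_B$. Alice privately receives a set $V_A\subseteq W_A$ and Bob privately receives a set $V_B\subseteq W_B$. There is a non-negative, monotone, submodular function $f:2^W\to\mathbb{R}_{\ge 0}$; Alice can query $f$ (via a value oracle) only on subsets of $W_A$, while Bob can query $f$ on any subset of $W$. A protocol consists of two possibly randomized algorithms: Alice's algorithm computes a message $m$ from the global information, $V_A$ and her oracle; then Bob's algorithm computes an output set $S\subseteq V_A\cup V_B$ with $|S|\le k$ from the global information, $V_B$, $m$ and his oracle. The communication complexity is the maximum length of $m$ over all inputs and the randomness; when the message consists of elements of $W$, it is measured in elements (number of elements of $W$ in $m$). The protocol has approximation guarantee $\rho$ if for every instance $\mathbb{E}[f(S)]\ge \rho\cdot\max\{f(T): T\subseteq V_A\cup V_B,\ |T|\le k\}$. A monotone submodular $f$ means $f(X)\le f(Y)$ for $X\subseteq Y$ and $f(X\cup\{v\})-f(X)\ge f(Y\cup\{v\})-f(Y)$ for $X\subseteq Y\subseteq W$, $v\notin Y$. $\widetilde{O}$ suppresses poly-logarithmic factors. No bound on computation time is required. *)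

theory Defs
  imports "HOL-Probability.Probability"
begin

text \<open>The ground set W is a finite set of naturals
(without loss of generality). Global information: k, W, W_A, W_B.
Alice: (k, W, W_A, W_B, V_A, oracle f) \<mapsto> random message (list of elements of W).
Bob:   (k, W, W_A, W_B, V_B, message, oracle f) \<mapsto> random output set.
Oracle access is modelled by requiring that Alice's output distribution depends on f only
through its values on subsets of W_A, and Bob's only through its values on subsets of W.
The two parties use independent private randomness.\<close>

type_synonym alice_alg =
  "nat \<Rightarrow> nat set \<Rightarrow> nat set \<Rightarrow> nat set \<Rightarrow> nat set \<Rightarrow> (nat set \<Rightarrow> real) \<Rightarrow> nat list pmf"

type_synonym bob_alg =
  "nat \<Rightarrow> nat set \<Rightarrow> nat set \<Rightarrow> nat set \<Rightarrow> nat set \<Rightarrow> nat list \<Rightarrow> (nat set \<Rightarrow> real) \<Rightarrow> nat set pmf"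

definition nonneg_monotone_submodular :: "nat set \<Rightarrow> (nat set \<Rightarrow> real) \<Rightarrow> bool" where
  "nonneg_monotone_submodular W f \<longleftrightarrow>
     (\<forall>X. X \<subseteq> W \<longrightarrow> f X \<ge> 0) \<and>
     (\<forall>X Y. X \<subseteq> Y \<and> Y \<subseteq> W \<longrightarrow> f X \<le> f Y) \<and>
     (\<forall>X Y v. X \<subseteq> Y \<and> Y \<subseteq> W \<and> v \<in> W \<and> v \<notin> Y \<longrightarrow>
        f (insert v X) - f X \<ge> f (insert v Y) - f Y)"

definition valid_instance ::
  "nat \<Rightarrow> nat set \<Rightarrow> nat set \<Rightarrow> nat set \<Rightarrow> nat set \<Rightarrow> nat set \<Rightarrow> (nat set \<Rightarrow> real) \<Rightarrow> bool" where
  "valid_instance k W WA WB VA VB f \<longleftrightarrow>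
     k > 0 \<and> finite W \<and> WA \<union> WB = W \<and> WA \<inter> WB = {} \<and>
     VA \<subseteq> WA \<and> VB \<subseteq> WB \<and> nonneg_monotone_submodular W f"

definition alice_oracle_ok :: "alice_alg \<Rightarrow> bool" where
  "alice_oracle_ok alice \<longleftrightarrow>
     (\<forall>k W WA WB VA f g. (\<forall>X. X \<subseteq> WA \<longrightarrow> f X = g X) \<longrightarrow>
        alice k W WA WB VA f = alice k W WA WB VA g)"

definition bob_oracle_ok :: "bob_alg \<Rightarrow> bool" where
  "bob_oracle_ok bob \<longleftrightarrow>
     (\<forall>k W WA WB VB m f g. (\<forall>X. X \<subseteq> W \<longrightarrow> f X = g X) \<longrightarrow>
        bob k W WA WB VB m f = bob k W WA WB VB m g)"

definition protocol_output ::
  "alice_alg \<Rightarrow> bob_alg \<Rightarrow> nat \<Rightarrow> nat set \<Rightarrow> nat set \<Rightarrow> nat set \<Rightarrow> nat set \<Rightarrow> nat set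
     \<Rightarrow> (nat set \<Rightarrow> real) \<Rightarrow> nat set pmf" where
  "protocol_output alice bob k W WA WB VA VB f =
     bind_pmf (alice k W WA WB VA f) (\<lambda>m. bob k W WA WB VB m f)"

definition opt_value :: "nat \<Rightarrow> nat set \<Rightarrow> (nat set \<Rightarrow> real) \<Rightarrow> real" where
  "opt_value k V f = Max (f ` {T. T \<subseteq> V \<and> card T \<le> k})"

definition is_protocol :: "alice_alg \<Rightarrow> bob_alg \<Rightarrow> bool" where
  "is_protocol alice bob \<longleftrightarrow>
     alice_oracle_ok alice \<and> bob_oracle_ok bob \<and>
     (\<forall>k W WA WB VA VB f. valid_instance k W WA WB VA VB f \<longrightarrow>
        (\<forall>S \<in> set_pmf (protocol_output alice bob k W WA WB VA VB f).
            S \<subseteq> VA \<union> VB \<and> card S \<le> k))"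

definition approx_guarantee :: "alice_alg \<Rightarrow> bob_alg \<Rightarrow> real \<Rightarrow> bool" where
  "approx_guarantee alice bob \<rho> \<longleftrightarrow>
     (\<forall>k W WA WB VA VB f. valid_instance k W WA WB VA VB f \<longrightarrow>
        measure_pmf.expectation (protocol_output alice bob k W WA WB VA VB f) f
          \<ge> \<rho> * opt_value k (VA \<union> VB) f)"

definition comm_bounded :: "alice_alg \<Rightarrow> (nat \<Rightarrow> real) \<Rightarrow> bool" where
  "comm_bounded alice B \<longleftrightarrow>
     (\<forall>k W WA WB VA VB f. valid_instance k W WA WB VA VB f \<longrightarrow>
        (\<forall>m \<in> set_pmf (alice k W WA WB VA f). set m \<subseteq> W \<and> real (length m) \<le> B k))"

end

theory Submission
  imports Defs
begin

(* For every multiple a = s i \<le> k of a step s, Alice sends a best a-subset P of her elements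
   and a best a-subset R to add to P; Bob returns the best k-subset of everything he sees.
   Split an optimal solution as A \<union> B with A on Alice's side and round |A| up to a multiple a
   of s. Then f A \<le> f P and f (P \<union> A) \<le> f (P \<union> R), and three applications of submodularity
   give 2 f (A \<union> B) \<le> 3 max (f (P \<union> B)) (f (R \<union> B)), while P \<union> B and R \<union> B are feasible
   for Bob. The rounding needs s - 1 spare places, which costs a factor (k - s + 1) / k because
   some m-subset of a set Q keeps an m / |Q| fraction of f Q. The step s = \<lfloor>\<epsilon> k\<rfloor> + 1
   gives 2/3 - \<epsilon> with 2k/\<epsilon> elements, and s = 1 gives 2/3 with 2k^2 elements. *)

context
  fixes W :: "nat set" and f :: "nat set \<Rightarrow> real"
  assumes f_submodular: "nonneg_monotone_submodular W f"
begin

lemma submodular_nonneg: "X \<subseteq> W \<Longrightarrow> 0 \<le> f X"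
  using f_submodular unfolding nonneg_monotone_submodular_def by blast

lemma submodular_mono: "X \<subseteq> Y \<Longrightarrow> Y \<subseteq> W \<Longrightarrow> f X \<le> f Y"
  using f_submodular unfolding nonneg_monotone_submodular_def by blast

lemma submodular_insert_gain_antimono:
  "X \<subseteq> Y \<Longrightarrow> Y \<subseteq> W \<Longrightarrow> v \<in> W \<Longrightarrow> v \<notin> Y \<Longrightarrow>
   f (insert v Y) - f Y \<le> f (insert v X) - f X"
  using f_submodular unfolding nonneg_monotone_submodular_def by blast

lemma submodular_union_gain_antimono:
  assumes "finite D" "X \<subseteq> Y" "Y \<union> D \<subseteq> W" "D \<inter> Y = {}"
  shows "f (Y \<union> D) - f Y \<le> f (X \<union> D) - f X"
  using assms
proof (induction D rule: finite_induct)
  case empty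
  then show ?case by simp
next
  case (insert d D)
  have "f (insert d (Y \<union> D)) - f (Y \<union> D) \<le> f (insert d (X \<union> D)) - f (X \<union> D)"
    by (rule submodular_insert_gain_antimono) (use insert in auto)
  with insert show ?case by simp
qed

lemma submodular_union_inter:
  assumes "finite X" "X \<subseteq> W" "Y \<subseteq> W"
  shows "f (X \<union> Y) + f (X \<inter> Y) \<le> f X + f Y"
proof -
  have "f (Y \<union> (X - Y)) - f Y \<le> f ((X \<inter> Y) \<union> (X - Y)) - f (X \<inter> Y)"
    by (rule submodular_union_gain_antimono) (use assms in auto)
  moreover have "Y \<union> (X - Y) = X \<union> Y" "(X \<inter> Y) \<union> (X - Y) = X" by auto
  ultimately show ?thesis by simp
qed

lemma sum_removal_gains_le:
  assumes "finite Q" "Q \<subseteq> W"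
  shows "(\<Sum>x\<in>Q. f Q - f (Q - {x})) \<le> f Q - f {}"
  using assms
proof (induction Q rule: finite_induct)
  case empty
  then show ?case by simp
next
  case (insert y Q)
  have "f (insert y Q) - f (insert y Q - {x}) \<le> f Q - f (Q - {x})" if "x \<in> Q" for x
  proof -
    have "insert y Q = insert x (insert y (Q - {x}))" "insert y Q - {x} = insert y (Q - {x})"
         "Q = insert x (Q - {x})"
      using that insert.hyps by auto
    moreover have "f (insert x (insert y (Q - {x}))) - f (insert y (Q - {x}))
        \<le> f (insert x (Q - {x})) - f (Q - {x})"
      by (rule submodular_insert_gain_antimono) (use insert that in auto)
    ultimately show ?thesis by metis
  qed
  then have "(\<Sum>x\<in>Q. f (insert y Q) - f (insert y Q - {x})) \<le> (\<Sum>x\<in>Q. f Q - f (Q - {x}))"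
    by (rule sum_mono)
  moreover have "(\<Sum>x\<in>Q. f Q - f (Q - {x})) \<le> f Q - f {}"
    using insert by simp
  ultimately show ?case
    using insert.hyps by simp
qed

lemma exists_removal_ge:
  assumes "finite Q" "Q \<subseteq> W" "Q \<noteq> {}"
  shows "\<exists>x\<in>Q. real (card Q - 1) * f Q \<le> real (card Q) * f (Q - {x})"
proof -
  let ?gain = "\<lambda>x. f Q - f (Q - {x})"
  obtain x where x: "x \<in> Q" "\<And>y. y \<in> Q \<Longrightarrow> ?gain x \<le> ?gain y"
    using ex_min_if_finite[of "?gain ` Q"] assms by fastforce
  have "real (card Q) * ?gain x \<le> (\<Sum>y\<in>Q. ?gain y)"
    using x(2) by (rule sum_bounded_below)
  also have "\<dots> \<le> f Q - f {}"
    using sum_removal_gains_le assms by blast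
  also have "\<dots> \<le> f Q"
    using submodular_nonneg by simp
  finally have "real (card Q) * ?gain x \<le> f Q" .
  moreover have "real (card Q - 1) = real (card Q) - 1"
    using assms by (simp add: Suc_leI card_gt_0_iff of_nat_diff)
  ultimately show ?thesis
    using x(1) by (auto simp: algebra_simps)
qed

lemma exists_subset_card_ge:
  assumes "finite Q" "Q \<subseteq> W" "m \<le> card Q"
  shows "\<exists>Q'\<subseteq>Q. card Q' = m \<and> real m * f Q \<le> real (card Q) * f Q'"
  using assms
proof (induction "card Q" arbitrary: Q)
  case 0
  then show ?case by auto
next
  case (Suc n)
  show ?case
  proof (cases "m = card Q")
    case True
    then show ?thesis by auto
  next
    case False
    with Suc.prems(3) Suc.hyps(2) have "m \<le> n"
      by simp
    have "Q \<noteq> {}"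
      using Suc.hyps(2) by auto
    then obtain x where x: "x \<in> Q" "real (card Q - 1) * f Q \<le> real (card Q) * f (Q - {x})"
      using exists_removal_ge Suc.prems(1,2) by blast
    have "card (Q - {x}) = n"
      using x(1) Suc.hyps(2) Suc.prems(1) by simp
    then obtain Q' where Q': "Q' \<subseteq> Q - {x}" "card Q' = m" "real m * f (Q - {x}) \<le> real n * f Q'"
      using Suc.hyps(1)[of "Q - {x}"] Suc.prems(1,2) \<open>m \<le> n\<close> by auto
    have removal: "real n * f Q \<le> real (Suc n) * f (Q - {x})"
      using x(2) unfolding Suc.hyps(2)[symmetric] by simp
    have "real m * f Q \<le> real (Suc n) * f Q'"
    proof (cases "n = 0")
      case True
      have "0 \<le> f Q'"
        using Q'(1) Suc.prems(2) by (intro submodular_nonneg) auto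
      with True \<open>m \<le> n\<close> show ?thesis
        by simp
    next
      case False
      have "real n * (real m * f Q) = real m * (real n * f Q)"
        by simp
      also have "\<dots> \<le> real m * (real (Suc n) * f (Q - {x}))"
        using removal by (intro mult_left_mono) auto
      also have "\<dots> = real (Suc n) * (real m * f (Q - {x}))"
        by simp
      also have "\<dots> \<le> real (Suc n) * (real n * f Q')"
        using Q'(3) by (intro mult_left_mono) auto
      also have "\<dots> = real n * (real (Suc n) * f Q')"
        by simp
      finally show ?thesis
        using False by simp
    qed
    then show ?thesis
      using Q' Suc.hyps(2) by auto
  qed
qed

lemma exists_small_subset_ge:
  assumes "finite Q" "Q \<subseteq> W" "card Q \<le> k" "r \<le> k"
  shows "\<exists>Q'\<subseteq>Q. card Q' \<le> r \<and> real r * f Q \<le> real k * f Q'"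
proof (cases "card Q \<le> r")
  case True
  have "real r * f Q \<le> real k * f Q"
    using assms submodular_nonneg by (intro mult_right_mono) auto
  with True show ?thesis
    by blast
next
  case False
  then obtain Q' where Q': "Q' \<subseteq> Q" "card Q' = r" "real r * f Q \<le> real (card Q) * f Q'"
    using exists_subset_card_ge[OF assms(1,2), of r] by auto
  moreover have "real (card Q) * f Q' \<le> real k * f Q'"
    using assms Q'(1) submodular_nonneg by (intro mult_right_mono) auto
  ultimately show ?thesis
    by (metis order.trans order.refl)
qed

lemma two_thirds_augmentation:
  assumes "finite W" "A \<subseteq> W" "B \<subseteq> W" "P \<subseteq> W" "R \<subseteq> W"
    and P: "f A \<le> f P" and R: "f (P \<union> A) \<le> f (P \<union> R)"
  shows "2 * f (A \<union> B) \<le> 3 * max (f (P \<union> B)) (f (R \<union> B))"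
proof -
  have fin: "finite X" if "X \<subseteq> W" for X
    using that assms(1) by (rule finite_subset)
  have "f (P \<union> R) + f B \<le> f (P \<union> B) + f (R \<union> B)"
  proof -
    have "f (P \<union> R) \<le> f ((P \<union> B) \<union> (R \<union> B))" "f B \<le> f ((P \<union> B) \<inter> (R \<union> B))"
      using assms by (auto intro!: submodular_mono)
    moreover have "f ((P \<union> B) \<union> (R \<union> B)) + f ((P \<union> B) \<inter> (R \<union> B)) \<le> f (P \<union> B) + f (R \<union> B)"
      using assms by (intro submodular_union_inter fin) auto
    ultimately show ?thesis by linarith
  qed
  moreover have "f (A \<union> B) + f P \<le> f (P \<union> A) + f (P \<union> B)"
  proof -
    have "f (A \<union> B) \<le> f ((P \<union> A) \<union> (P \<union> B))" "f P \<le> f ((P \<union> A) \<inter> (P \<union> B))"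
      using assms by (auto intro!: submodular_mono)
    moreover have "f ((P \<union> A) \<union> (P \<union> B)) + f ((P \<union> A) \<inter> (P \<union> B)) \<le> f (P \<union> A) + f (P \<union> B)"
      using assms by (intro submodular_union_inter fin) auto
    ultimately show ?thesis by linarith
  qed
  moreover have "f (A \<union> B) \<le> f A + f B"
  proof -
    have "f (A \<union> B) + f (A \<inter> B) \<le> f A + f B"
      using assms by (intro submodular_union_inter fin) auto
    moreover have "0 \<le> f (A \<inter> B)"
      using assms by (intro submodular_nonneg) auto
    ultimately show ?thesis by linarith
  qed
  ultimately show ?thesis
    using P R by linarith
qed

end

lemma arg_max_on_finite:
  fixes h :: "'a \<Rightarrow> 'b::linorder"
  assumes "finite S" "S \<noteq> {}"
  shows "arg_max_on h S \<in> S \<and> (\<forall>y\<in>S. h y \<le> h (arg_max_on h S))"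
proof -
  have "Max (h ` S) \<in> h ` S"
    using assms by simp
  then obtain x where "x \<in> S" "h x = Max (h ` S)"
    by (metis imageE)
  then have x: "x \<in> S" "\<And>y. y \<in> S \<Longrightarrow> h y \<le> h x"
    using assms by auto
  show ?thesis
    unfolding arg_max_on_def
    by (rule arg_maxI[where P = "\<lambda>z. z \<in> S" and Q = "\<lambda>z. z \<in> S \<and> (\<forall>y\<in>S. h y \<le> h z)"])
      (use x in \<open>auto simp: not_less\<close>)
qed

(* The maximum need not exist for infinite V; the else-branch keeps max_subset V a h \<subseteq> V
   unconditional, so the oracle restrictions hold on arbitrary inputs. *)
definition max_subset :: "'a set \<Rightarrow> nat \<Rightarrow> ('a set \<Rightarrow> 'b::linorder) \<Rightarrow> 'a set" where
  "max_subset V a h = (if finite V then arg_max_on h {X. X \<subseteq> V \<and> card X \<le> a} else {})"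

lemma
  shows max_subset_subset: "max_subset V a h \<subseteq> V"
    and card_max_subset_le: "card (max_subset V a h) \<le> a"
proof -
  have "max_subset V a h \<subseteq> V \<and> card (max_subset V a h) \<le> a"
  proof (cases "finite V")
    case True
    then have "finite {X. X \<subseteq> V \<and> card X \<le> a}" "{X. X \<subseteq> V \<and> card X \<le> a} \<noteq> {}"
      by auto
    from arg_max_on_finite[OF this, of h] True show ?thesis
      unfolding max_subset_def by simp
  qed (simp add: max_subset_def)
  then show "max_subset V a h \<subseteq> V" "card (max_subset V a h) \<le> a"
    by simp_all
qed

lemma max_subset_ge:
  assumes "finite V" "X \<subseteq> V" "card X \<le> a"
  shows "h X \<le> h (max_subset V a h)"
proof -
  have "finite {X. X \<subseteq> V \<and> card X \<le> a}" "{X. X \<subseteq> V \<and> card X \<le> a} \<noteq> {}"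
    using assms by auto
  from arg_max_on_finite[OF this, of h] assms show ?thesis
    unfolding max_subset_def by simp
qed

lemma max_subset_cong:
  assumes "\<And>X. X \<subseteq> V \<Longrightarrow> h X = h' X"
  shows "max_subset V a h = max_subset V a h'"
proof -
  have "is_arg_max h (\<lambda>X. X \<in> {X. X \<subseteq> V \<and> card X \<le> a}) =
        is_arg_max h' (\<lambda>X. X \<in> {X. X \<subseteq> V \<and> card X \<le> a})"
    using assms by (auto simp: is_arg_max_def fun_eq_iff)
  then show ?thesis
    unfolding max_subset_def arg_max_on_def arg_max_def by simp
qed

lemma opt_value_eq_max_subset:
  assumes "finite V"
  shows "opt_value k V f = f (max_subset V k f)"
  unfolding opt_value_def
proof (rule Max_eqI)
  show "finite (f ` {T. T \<subseteq> V \<and> card T \<le> k})"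
    using assms by simp
  show "y \<le> f (max_subset V k f)" if "y \<in> f ` {T. T \<subseteq> V \<and> card T \<le> k}" for y
    using that max_subset_ge[OF assms, of _ k f] by blast
  show "f (max_subset V k f) \<in> f ` {T. T \<subseteq> V \<and> card T \<le> k}"
    by (intro imageI) (simp add: max_subset_subset card_max_subset_le)
qed

definition augmenting_subset :: "'a set \<Rightarrow> nat \<Rightarrow> ('a set \<Rightarrow> 'b::linorder) \<Rightarrow> 'a set" where
  "augmenting_subset V a h = max_subset V a (\<lambda>X. h (max_subset V a h \<union> X))"

definition alice_elements :: "nat \<Rightarrow> nat \<Rightarrow> 'a set \<Rightarrow> ('a set \<Rightarrow> 'b::linorder) \<Rightarrow> 'a set" where
  "alice_elements s k V h =
     (\<Union>i\<in>{1..k div s}. max_subset V (s * i) h \<union> augmenting_subset V (s * i) h)"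

(* On valid instances VA \<inter> WA = VA; the intersection (and the one with W in bob_protocol)
   keeps the oracle queries inside the permitted sets on every input. *)
definition alice_protocol :: "(nat \<Rightarrow> nat) \<Rightarrow> alice_alg" where
  "alice_protocol s k W WA WB VA f =
     return_pmf (sorted_list_of_set (alice_elements (s k) k (VA \<inter> WA) f))"

definition bob_protocol :: bob_alg where
  "bob_protocol k W WA WB VB m f = return_pmf (max_subset ((set m \<union> VB) \<inter> W) k f)"

lemma alice_elements_subset: "alice_elements s k V h \<subseteq> V"
  unfolding alice_elements_def augmenting_subset_def by (intro UN_least Un_least max_subset_subset)

lemma card_alice_elements_le: "card (alice_elements s k V h) \<le> 2 * k * (k div s)"
proof -
  have "card (alice_elements s k V h)
      \<le> (\<Sum>i\<in>{1..k div s}. card (max_subset V (s * i) h \<union> augmenting_subset V (s * i) h))"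
    unfolding alice_elements_def by (rule card_UN_le) simp
  also have "\<dots> \<le> (\<Sum>i\<in>{1..k div s}. 2 * k)"
  proof (rule sum_mono)
    fix i assume "i \<in> {1..k div s}"
    then have "s * i \<le> s * (k div s)"
      by (intro mult_le_mono2) simp
    also have "\<dots> \<le> k"
      by (rule times_div_less_eq_dividend)
    finally have "s * i \<le> k" .
    moreover have "card (max_subset V (s * i) h) \<le> s * i" "card (augmenting_subset V (s * i) h) \<le> s * i"
      unfolding augmenting_subset_def by (rule card_max_subset_le)+
    ultimately show "card (max_subset V (s * i) h \<union> augmenting_subset V (s * i) h) \<le> 2 * k"
      using card_Un_le[of "max_subset V (s * i) h" "augmenting_subset V (s * i) h"] by linarith
  qed
  also have "\<dots> = 2 * k * (k div s)"
    by simp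
  finally show ?thesis .
qed

lemma alice_elements_cong:
  assumes "V \<subseteq> U" "\<And>X. X \<subseteq> U \<Longrightarrow> h X = h' X"
  shows "alice_elements s k V h = alice_elements s k V h'"
proof -
  have max_eq: "max_subset V a h = max_subset V a h'" for a
    by (rule max_subset_cong) (meson assms subset_trans)
  have "augmenting_subset V a h = augmenting_subset V a h'" for a
    unfolding augmenting_subset_def max_eq
  proof (rule max_subset_cong)
    fix X assume "X \<subseteq> V"
    then have "max_subset V a h' \<union> X \<subseteq> U"
      using assms(1) max_subset_subset[of V a h'] by blast
    then show "h (max_subset V a h' \<union> X) = h' (max_subset V a h' \<union> X)"
      using assms(2) by blast
  qed
  with max_eq show ?thesis
    unfolding alice_elements_def by simp
qed

lemma alice_oracle_ok_alice_protocol: "alice_oracle_ok (alice_protocol s)"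
  unfolding alice_oracle_ok_def
proof (intro allI impI)
  fix k W WA WB VA and f g :: "nat set \<Rightarrow> real"
  assume "\<forall>X. X \<subseteq> WA \<longrightarrow> f X = g X"
  then have "alice_elements (s k) k (VA \<inter> WA) f = alice_elements (s k) k (VA \<inter> WA) g"
    by (intro alice_elements_cong[of _ WA]) auto
  then show "alice_protocol s k W WA WB VA f = alice_protocol s k W WA WB VA g"
    unfolding alice_protocol_def by simp
qed

lemma bob_oracle_ok_bob_protocol: "bob_oracle_ok bob_protocol"
  unfolding bob_oracle_ok_def
proof (intro allI impI)
  fix k W WA WB VB m and f g :: "nat set \<Rightarrow> real"
  assume "\<forall>X. X \<subseteq> W \<longrightarrow> f X = g X"
  then have "max_subset ((set m \<union> VB) \<inter> W) k f = max_subset ((set m \<union> VB) \<inter> W) k g"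
    by (intro max_subset_cong) auto
  then show "bob_protocol k W WA WB VB m f = bob_protocol k W WA WB VB m g"
    unfolding bob_protocol_def by simp
qed

lemma protocol_output_alice_bob:
  assumes "valid_instance k W WA WB VA VB f"
  shows "protocol_output (alice_protocol s) bob_protocol k W WA WB VA VB f =
         return_pmf (max_subset ((alice_elements (s k) k VA f \<union> VB) \<inter> W) k f)"
proof -
  have "VA \<subseteq> W" "finite W" "VA \<subseteq> WA"
    using assms unfolding valid_instance_def by auto
  then have "finite VA" "VA \<inter> WA = VA"
    by (auto intro: finite_subset)
  moreover from \<open>finite VA\<close> have "finite (alice_elements (s k) k VA f)"
    by (rule finite_subset[OF alice_elements_subset])
  ultimately show ?thesis
    unfolding protocol_output_def alice_protocol_def bob_protocol_def
    by (simp add: bind_return_pmf)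
qed

lemma feasible_alice_bob:
  assumes "valid_instance k W WA WB VA VB f"
    and "S \<in> set_pmf (protocol_output (alice_protocol s) bob_protocol k W WA WB VA VB f)"
  shows "S \<subseteq> VA \<union> VB \<and> card S \<le> k"
proof -
  let ?U = "(alice_elements (s k) k VA f \<union> VB) \<inter> W"
  have "S = max_subset ?U k f"
    using assms by (simp add: protocol_output_alice_bob)
  then have "S \<subseteq> ?U" "card S \<le> k"
    by (simp_all only: max_subset_subset card_max_subset_le)
  moreover have "?U \<subseteq> VA \<union> VB"
    using alice_elements_subset[of "s k" k VA f] by blast
  ultimately show ?thesis
    by blast
qed

lemma is_protocol_alice_bob: "is_protocol (alice_protocol s) bob_protocol"
  unfolding is_protocol_def
  by (simp add: alice_oracle_ok_alice_protocol bob_oracle_ok_bob_protocol feasible_alice_bob)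

lemma comm_bounded_alice_protocol:
  "comm_bounded (alice_protocol s) (\<lambda>k. 2 * real k * real (k div s k))"
  unfolding comm_bounded_def
proof (intro allI impI ballI)
  fix k W WA WB VA VB f m
  assume vi: "valid_instance k W WA WB VA VB f"
    and m: "m \<in> set_pmf (alice_protocol s k W WA WB VA f)"
  let ?M = "alice_elements (s k) k (VA \<inter> WA) f"
  have "finite W" "VA \<subseteq> W"
    using vi unfolding valid_instance_def by auto
  then have M_sub: "?M \<subseteq> W"
    using alice_elements_subset[of "s k" k "VA \<inter> WA" f] by blast
  then have "finite ?M"
    using \<open>finite W\<close> by (rule finite_subset)
  moreover have "m = sorted_list_of_set ?M"
    using m unfolding alice_protocol_def by simp
  ultimately have "set m = ?M" "length m = card ?M"
    by simp_all
  moreover have "real (card ?M) \<le> real (2 * k * (k div s k))"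
    using card_alice_elements_le by (rule of_nat_mono)
  ultimately show "set m \<subseteq> W \<and> real (length m) \<le> 2 * real k * real (k div s k)"
    using M_sub by simp
qed

lemma comm_bounded_mono:
  assumes "comm_bounded alice B" "\<And>k. B k \<le> B' k"
  shows "comm_bounded alice B'"
  unfolding comm_bounded_def
proof (intro allI impI ballI)
  fix k W WA WB VA VB f m
  assume "valid_instance k W WA WB VA VB f" "m \<in> set_pmf (alice k W WA WB VA f)"
  then have "set m \<subseteq> W" "real (length m) \<le> B k"
    using assms(1) unfolding comm_bounded_def by blast+
  with assms(2)[of k] show "set m \<subseteq> W \<and> real (length m) \<le> B' k"
    by simp
qed

lemma exists_round_up_index:
  fixes s x y :: nat
  assumes "0 < s" "0 < x" "x + (s - 1) + y \<le> k"
  shows "\<exists>i\<in>{1..k div s}. x \<le> s * i \<and> s * i + y \<le> k"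
proof -
  define i where "i = (x + (s - 1)) div s"
  have "x + (s - 1) = s * i + (x + (s - 1)) mod s" "(x + (s - 1)) mod s < s"
    using assms(1) unfolding i_def by simp_all
  then have "x \<le> s * i" "s * i + y \<le> k"
    using assms(3) by linarith+
  moreover have "1 \<le> i"
    using \<open>x \<le> s * i\<close> assms(2) by (cases i) auto
  moreover have "i \<le> k div s"
    using \<open>s * i + y \<le> k\<close> assms(1) by (simp add: less_eq_div_iff_mult_less_eq mult.commute)
  ultimately show ?thesis by auto
qed

lemma alice_elements_two_thirds:
  assumes f: "nonneg_monotone_submodular W f" and "finite W" "V \<subseteq> W" "A \<subseteq> V" "B \<subseteq> W"
    and "i \<in> {1..k div s}" "card A \<le> s * i"
  shows "\<exists>P\<subseteq>alice_elements s k V f. card P \<le> s * i \<and> 2 * f (A \<union> B) \<le> 3 * f (P \<union> B)"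
proof -
  let ?P = "max_subset V (s * i) f" and ?R = "augmenting_subset V (s * i) f"
  have "finite V"
    using \<open>V \<subseteq> W\<close> \<open>finite W\<close> by (rule finite_subset)
  have "f A \<le> f ?P"
    using \<open>finite V\<close> \<open>A \<subseteq> V\<close> \<open>card A \<le> s * i\<close> by (rule max_subset_ge)
  moreover have "f (?P \<union> A) \<le> f (?P \<union> ?R)"
    unfolding augmenting_subset_def
    using \<open>finite V\<close> \<open>A \<subseteq> V\<close> \<open>card A \<le> s * i\<close> by (rule max_subset_ge)
  moreover have "?P \<subseteq> W" "?R \<subseteq> W"
    using max_subset_subset[of V] \<open>V \<subseteq> W\<close> unfolding augmenting_subset_def by blast+
  ultimately have "2 * f (A \<union> B) \<le> 3 * max (f (?P \<union> B)) (f (?R \<union> B))"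
    using assms by (intro two_thirds_augmentation[OF f]) auto
  moreover have "?P \<subseteq> alice_elements s k V f" "?R \<subseteq> alice_elements s k V f"
    using \<open>i \<in> {1..k div s}\<close> unfolding alice_elements_def by blast+
  moreover have "card ?P \<le> s * i" "card ?R \<le> s * i"
    unfolding augmenting_subset_def by (rule card_max_subset_le)+
  ultimately show ?thesis
    by (cases "f (?R \<union> B) \<le> f (?P \<union> B)") (auto simp: max_def)
qed

lemma bob_output_two_thirds:
  assumes vi: "valid_instance k W WA WB VA VB f" and "0 < s"
    and Q: "Q \<subseteq> VA \<union> VB" "card Q \<le> k - (s - 1)"
  shows "2 * f Q \<le> 3 * f (max_subset ((alice_elements s k VA f \<union> VB) \<inter> W) k f)"
    (is "_ \<le> 3 * f (max_subset ?U k f)")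
proof -
  have "finite W" "VA \<subseteq> W" "VB \<subseteq> W" "VA \<inter> VB = {}" and f: "nonneg_monotone_submodular W f"
    using vi unfolding valid_instance_def by auto
  have T_ge: "f Y \<le> f (max_subset ?U k f)" if "Y \<subseteq> ?U" "card Y \<le> k" for Y
    using _ that by (rule max_subset_ge) (simp add: \<open>finite W\<close>)
  define A where "A = Q \<inter> VA"
  define B where "B = Q \<inter> VB"
  have "Q = A \<union> B" "A \<subseteq> VA" "B \<subseteq> ?U"
    using Q(1) \<open>VB \<subseteq> W\<close> by (auto simp: A_def B_def)
  have "finite Q"
    using Q(1) \<open>VA \<subseteq> W\<close> \<open>VB \<subseteq> W\<close> \<open>finite W\<close> by (auto intro: finite_subset)
  have "card (A \<union> B) = card A + card B"
    by (rule card_Un_disjoint) (use \<open>finite Q\<close> \<open>VA \<inter> VB = {}\<close> in \<open>auto simp: A_def B_def\<close>)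
  with \<open>Q = A \<union> B\<close> have card_Q: "card Q = card A + card B"
    by simp
  have "0 \<le> f Q"
    using Q(1) \<open>VA \<subseteq> W\<close> \<open>VB \<subseteq> W\<close> by (intro submodular_nonneg[OF f]) auto
  show ?thesis
  proof (cases "A = {}")
    case True
    then have "f Q \<le> f (max_subset ?U k f)"
      using T_ge \<open>Q = A \<union> B\<close> \<open>B \<subseteq> ?U\<close> Q(2) by simp
    with \<open>0 \<le> f Q\<close> show ?thesis
      by linarith
  next
    case False
    then have "0 < card A"
      using \<open>finite Q\<close> \<open>Q = A \<union> B\<close> by auto
    moreover have "card A + (s - 1) + card B \<le> k"
      using Q(2) card_Q \<open>0 < card A\<close> by linarith
    ultimately obtain i where i: "i \<in> {1..k div s}" "card A \<le> s * i" "s * i + card B \<le> k"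
      using exists_round_up_index[OF \<open>0 < s\<close>] by blast
    have "B \<subseteq> W"
      using \<open>B \<subseteq> ?U\<close> by blast
    obtain P where P: "P \<subseteq> alice_elements s k VA f" "card P \<le> s * i"
        "2 * f (A \<union> B) \<le> 3 * f (P \<union> B)"
      using alice_elements_two_thirds[OF f \<open>finite W\<close> \<open>VA \<subseteq> W\<close> \<open>A \<subseteq> VA\<close> \<open>B \<subseteq> W\<close> i(1,2)]
      by blast
    have "f (P \<union> B) \<le> f (max_subset ?U k f)"
    proof (rule T_ge)
      show "P \<union> B \<subseteq> ?U"
        using P(1) \<open>B \<subseteq> ?U\<close> alice_elements_subset[of s k VA f] \<open>VA \<subseteq> W\<close> by blast
      show "card (P \<union> B) \<le> k"
        using card_Un_le[of P B] P(2) i(3) by linarith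
    qed
    with P(3) \<open>Q = A \<union> B\<close> show ?thesis
      by simp
  qed
qed

lemma two_thirds_loss_le:
  fixes \<delta> :: real
  assumes "real (s - 1) \<le> \<delta> * real k"
  shows "3 * (2/3 - \<delta>) * real k \<le> 2 * real (k - (s - 1))"
proof -
  have "3 * (2/3 - \<delta>) * real k = 2 * real k - 3 * (\<delta> * real k)"
    by (simp add: algebra_simps)
  moreover have "real k - real (s - 1) \<le> real (k - (s - 1))"
    by simp
  ultimately show ?thesis
    using assms of_nat_0_le_iff[of "s - 1"] by linarith
qed

lemma approx_guarantee_alice_protocol:
  assumes s_pos: "\<And>k. 0 < s k" and s_le: "\<And>k. real (s k - 1) \<le> \<delta> * real k"
  shows "approx_guarantee (alice_protocol s) bob_protocol (2/3 - \<delta>)"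
  unfolding approx_guarantee_def
proof (intro allI impI)
  fix k W WA WB VA VB f
  assume vi: "valid_instance k W WA WB VA VB f"
  have "0 < k" "finite W" "VA \<union> VB \<subseteq> W" and f: "nonneg_monotone_submodular W f"
    using vi unfolding valid_instance_def by auto
  have "finite (VA \<union> VB)"
    using \<open>VA \<union> VB \<subseteq> W\<close> \<open>finite W\<close> by (rule finite_subset)
  let ?T = "max_subset ((alice_elements (s k) k VA f \<union> VB) \<inter> W) k f"
  let ?Q = "max_subset (VA \<union> VB) k f"
  let ?r = "k - (s k - 1)"
  have "?Q \<subseteq> W"
    using max_subset_subset[of "VA \<union> VB" k f] \<open>VA \<union> VB \<subseteq> W\<close> by blast
  have "finite ?Q"
    using \<open>?Q \<subseteq> W\<close> \<open>finite W\<close> by (rule finite_subset)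
  obtain Q' where Q': "Q' \<subseteq> ?Q" "card Q' \<le> ?r" "real ?r * f ?Q \<le> real k * f Q'"
    using exists_small_subset_ge[OF f \<open>finite ?Q\<close> \<open>?Q \<subseteq> W\<close> card_max_subset_le diff_le_self]
    by blast
  have "2 * f Q' \<le> 3 * f ?T"
    using Q'(1,2) max_subset_subset[of "VA \<union> VB" k f]
    by (intro bob_output_two_thirds[OF vi s_pos]) auto
  have "0 \<le> f ?Q"
    using \<open>?Q \<subseteq> W\<close> by (rule submodular_nonneg[OF f])
  have "3 * real k * ((2/3 - \<delta>) * f ?Q) = (3 * (2/3 - \<delta>) * real k) * f ?Q"
    by simp
  also have "\<dots> \<le> (2 * real ?r) * f ?Q"
    using two_thirds_loss_le[OF s_le] \<open>0 \<le> f ?Q\<close> by (rule mult_right_mono)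
  also have "\<dots> \<le> 2 * (real k * f Q')"
    using Q'(3) by simp
  also have "\<dots> \<le> 3 * real k * f ?T"
    using mult_left_mono[OF \<open>2 * f Q' \<le> 3 * f ?T\<close>, of "real k"] by (simp add: algebra_simps)
  finally have "(2/3 - \<delta>) * f ?Q \<le> f ?T"
    by (rule mult_left_le_imp_le) (use \<open>0 < k\<close> in simp)
  then show "(2/3 - \<delta>) * opt_value k (VA \<union> VB) f
      \<le> measure_pmf.expectation (protocol_output (alice_protocol s) bob_protocol k W WA WB VA VB f) f"
    using opt_value_eq_max_subset[OF \<open>finite (VA \<union> VB)\<close>] protocol_output_alice_bob[OF vi] by simp
qed

lemma floor_step_div_le:
  fixes \<epsilon> :: real
  assumes "0 < \<epsilon>"
  shows "real (k div (nat \<lfloor>\<epsilon> * real k\<rfloor> + 1)) \<le> 1 / \<epsilon>"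
proof -
  let ?s = "nat \<lfloor>\<epsilon> * real k\<rfloor> + 1"
  have "real (nat \<lfloor>\<epsilon> * real k\<rfloor>) = of_int \<lfloor>\<epsilon> * real k\<rfloor>"
    using assms by simp
  then have "\<epsilon> * real k < real ?s"
    by linarith
  have "real (k div ?s) * (\<epsilon> * real k) \<le> real (k div ?s) * real ?s"
    using \<open>\<epsilon> * real k < real ?s\<close> by (intro mult_left_mono) auto
  also have "\<dots> = real (k div ?s * ?s)"
    by (simp only: of_nat_mult)
  also have "\<dots> \<le> real k"
    by (rule of_nat_mono[OF div_times_less_eq_dividend])
  finally have "real (k div ?s) * \<epsilon> * real k \<le> 1 * real k"
    by (simp add: mult.assoc)
  show ?thesis
  proof (cases "k = 0")
    case False
    from \<open>real (k div ?s) * \<epsilon> * real k \<le> 1 * real k\<close> have "real (k div ?s) * \<epsilon> \<le> 1"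
      by (rule mult_right_le_imp_le) (use False in simp)
    with assms show ?thesis
      by (simp add: field_simps)
  qed (use assms in simp)
qed

lemma floor_step_protocol:
  fixes \<epsilon> :: real
  assumes "0 < \<epsilon>"
  defines "s \<equiv> \<lambda>k. nat \<lfloor>\<epsilon> * real k\<rfloor> + 1"
  shows "approx_guarantee (alice_protocol s) bob_protocol (2/3 - \<epsilon>)"
    and "comm_bounded (alice_protocol s) (\<lambda>k. 2 * (real k / \<epsilon>))"
proof -
  show "approx_guarantee (alice_protocol s) bob_protocol (2/3 - \<epsilon>)"
    using assms by (intro approx_guarantee_alice_protocol) simp_all
  show "comm_bounded (alice_protocol s) (\<lambda>k. 2 * (real k / \<epsilon>))"
  proof (rule comm_bounded_mono[OF comm_bounded_alice_protocol])
    fix k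
    show "2 * real k * real (k div s k) \<le> 2 * (real k / \<epsilon>)"
      using mult_left_mono[OF floor_step_div_le[OF assms(1), of k], of "2 * real k"]
      by (simp add: s_def)
  qed
qed

lemma
  shows unit_step_approx_guarantee: "approx_guarantee (alice_protocol (\<lambda>_. 1)) bob_protocol (2/3)"
    and unit_step_comm_bounded: "comm_bounded (alice_protocol (\<lambda>_. 1)) (\<lambda>k. 2 * (real k)^2)"
proof -
  show "approx_guarantee (alice_protocol (\<lambda>_. 1)) bob_protocol (2/3)"
    using approx_guarantee_alice_protocol[of "\<lambda>_. 1" 0] by simp
  show "comm_bounded (alice_protocol (\<lambda>_. 1)) (\<lambda>k. 2 * (real k)^2)"
    by (rule comm_bounded_mono[OF comm_bounded_alice_protocol]) (simp add: power2_eq_square)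
qed

theorem theorem1:
  shows "(\<exists>(C::real) (d::nat). \<forall>\<epsilon>::real. \<epsilon> > 0 \<longrightarrow>
            (\<exists>alice bob. is_protocol alice bob \<and>
               approx_guarantee alice bob (2/3 - \<epsilon>) \<and>
               comm_bounded alice
                 (\<lambda>k. C * (real k / \<epsilon>) * (ln (real k + 1 / \<epsilon> + 1) + 1) ^ d)))
       \<and> (\<exists>(C::real) alice bob. is_protocol alice bob \<and>
            approx_guarantee alice bob (2/3) \<and>
            comm_bounded alice (\<lambda>k. C * (real k)^2))"
proof -
  have "\<forall>\<epsilon>>0. \<exists>alice bob. is_protocol alice bob \<and> approx_guarantee alice bob (2/3 - \<epsilon>) \<and>
      comm_bounded alice (\<lambda>k. 2 * (real k / \<epsilon>))"
    using floor_step_protocol is_protocol_alice_bob by blast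
  moreover have "\<exists>alice bob. is_protocol alice bob \<and> approx_guarantee alice bob (2/3) \<and>
      comm_bounded alice (\<lambda>k. 2 * (real k)^2)"
    using unit_step_approx_guarantee unit_step_comm_bounded is_protocol_alice_bob by blast
  ultimately show ?thesis
    by (intro conjI exI[of _ "2::real"] exI[of _ "0::nat"]) simp_all
qed

end
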